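(* Let $l\in\mathbb{N}$ and let $G^1,\dots,G^l$ be compatible nontrivial monotonic hypergraph sequences. For $n\in\mathbb{N}$ let $V_n:=V(G^1_n)$, and for $k\in\mathbb{N}$ let $Q^k_n:=(V_n,\binom{V_n}{k})$ and $Q^k=(Q^k_n)_{n\in\mathbb{N}}$. For $x\in\mathbb{R}$ let $M(x)\in\mathbb{N}\cup\{+\infty\}$ be the infimum of all $n\in\mathbb{N}$ with $|V_n|>x$. Then for every real $s>1$ and every $m\in\mathbb{N}_0$, $$\mathrm{vdW}_{l+m}(G^1,\dots,G^l,\underbrace{Q^2,\dots,Q^2}_{m})=\mathrm{vdW}_{l+1}(G^1,\dots,G^l,Q^{m+1})\le\max\Big(M(s\cdot m),\ \mathrm{cr}\big((G^1,\dots,G^l),1-\tfrac1s\big)\Big).$$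
   Context: A finite hypergraph $G=(V,E)$ has finite vertex set $V$ and $E\subseteq\mathcal P(V)$; $\binom{V}{k}$ is the set of $k$-element subsets of $V$. A sequence $(G_n)_{n\in\mathbb{N}}$ of finite hypergraphs is nontrivial monotonic if $V(G_n)\subseteq V(G_{n+1})$, $E(G_n)\subseteq E(G_{n+1})$, $V(G_1)\ne\emptyset$ and $\emptyset\notin E(G_n)$ for all $n$. Sequences $H^1,\dots,H^r$ are compatible if $V(H^1_n)=\dots=V(H^r_n)$ for all $n$. For compatible nontrivial monotonic sequences $H^1,\dots,H^r$, $\mathrm{vdW}_r(H^1,\dots,H^r)\in\mathbb{N}\cup\{+\infty\}$ is the infimum of all $n\in\mathbb{N}$ such that for every map $f:V(H^1_n)\to\{1,\dots,r\}$ there is some $i\in\{1,\dots,r\}$ and some hyperedge of $H^i_n$ all of whose vertices get colour $i$. A set is independent in a hypergraph if it contains no hyperedge. For $q\in\mathbb{R}_{>0}$, $\mathrm{cr}((H^1,\dots,H^r),q)\in\mathbb{N}\cup\{+\infty\}$ is the infimum of all $n\in\mathbb{N}$ such that for all $n'\ge n$ and all $r$-tuples $(S_1,\dots,S_r)$ of pairwise disjoint sets with $S_i$ independent in $H^i_{n'}$ we have $\frac{|S_1|+\dots+|S_r|}{|V(H^1_{n'})|}<q$. Infima of empty sets are $+\infty$. *)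

theory Defs
  imports Main "HOL-Library.Extended_Nat" Complex_Main
begin

text \<open>A finite hypergraph is a pair (V, E) with V finite and E a set of subsets of V.
  Sequences are indexed by nat; only indices n \<ge> 1 (the paper's \<nat>) matter.\<close>

type_synonym 'a hgraph = "'a set \<times> 'a set set"
type_synonym 'a hseq = "nat \<Rightarrow> 'a hgraph"

definition hypergraph :: "'a hgraph \<Rightarrow> bool" where
  "hypergraph G \<longleftrightarrow> finite (fst G) \<and> snd G \<subseteq> Pow (fst G)"

definition nontrivial_monotonic :: "'a hseq \<Rightarrow> bool" where
  "nontrivial_monotonic H \<longleftrightarrow>
     (\<forall>n\<ge>1. hypergraph (H n)
        \<and> fst (H n) \<subseteq> fst (H (Suc n))
        \<and> snd (H n) \<subseteq> snd (H (Suc n))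
        \<and> {} \<notin> snd (H n))
     \<and> fst (H 1) \<noteq> {}"

definition compatible :: "'a hseq list \<Rightarrow> bool" where
  "compatible Hs \<longleftrightarrow> (\<forall>n\<ge>1. \<forall>i<length Hs. \<forall>j<length Hs. fst ((Hs!i) n) = fst ((Hs!j) n))"

text \<open>van der Waerden-type number; colours are 0,...,r-1 instead of 1,...,r.\<close>
definition vdW :: "'a hseq list \<Rightarrow> enat" where
  "vdW Hs = Inf {enat n | n. n \<ge> 1 \<and>
      (\<forall>f :: 'a \<Rightarrow> nat. f ` fst ((Hs!0) n) \<subseteq> {..<length Hs} \<longrightarrow>
         (\<exists>i<length Hs. \<exists>e\<in>snd ((Hs!i) n). \<forall>v\<in>e. f v = i))}"

definition independent :: "'a hgraph \<Rightarrow> 'a set \<Rightarrow> bool" where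
  "independent G S \<longleftrightarrow> (\<forall>e\<in>snd G. \<not> e \<subseteq> S)"

definition cr :: "'a hseq list \<Rightarrow> real \<Rightarrow> enat" where
  "cr Hs q = Inf {enat n | n. n \<ge> 1 \<and>
      (\<forall>n'\<ge>n. \<forall>S :: nat \<Rightarrow> 'a set.
         (\<forall>i<length Hs. S i \<subseteq> fst ((Hs!i) n') \<and> independent ((Hs!i) n') (S i))
         \<and> (\<forall>i<length Hs. \<forall>j<length Hs. i \<noteq> j \<longrightarrow> S i \<inter> S j = {})
         \<longrightarrow> real (\<Sum>i<length Hs. card (S i)) / real (card (fst ((Hs!0) n'))) < q)}"

definition Qseq :: "(nat \<Rightarrow> 'a set) \<Rightarrow> nat \<Rightarrow> 'a hseq" where
  "Qseq V k = (\<lambda>n. (V n, {e. e \<subseteq> V n \<and> card e = k}))"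

definition Mfun :: "(nat \<Rightarrow> 'a set) \<Rightarrow> real \<Rightarrow> enat" where
  "Mfun V x = Inf {enat n | n. n \<ge> 1 \<and> real (card (V n)) > x}"

end

theory Submission
  imports Defs
begin

text \<open>A colouring of V_n has no monochromatic edge in any of the m copies of Q^2_n exactly
  when each of its last m colour classes has at most one vertex. Merging these classes into one
  class of at most m vertices, or conversely spreading such a class injectively over m colours,
  translates between colourings avoiding the two families, which gives the equality. For the
  bound, take n beyond both M(s m) and the covering-ratio threshold: in a colouring of V_n whose
  first l classes are independent in the G^i_n, these classes cover less than a fraction 1 - 1/s
  of V_n, so the last class has more than |V_n|/s > m vertices and contains an edge of
  Q^{m+1}_n.\<close>

definition uniform_edges :: "'a set \<Rightarrow> nat \<Rightarrow> 'a set set" where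
  "uniform_edges V k = {e. e \<subseteq> V \<and> card e = k}"

definition arrows :: "'a set \<Rightarrow> 'a set set list \<Rightarrow> bool" where
  "arrows V Es \<longleftrightarrow> (\<forall>f :: 'a \<Rightarrow> nat. f ` V \<subseteq> {..<length Es} \<longrightarrow>
     (\<exists>i<length Es. \<exists>e\<in>Es!i. \<forall>v\<in>e. f v = i))"

lemma arrows_uniform_if_arrows_pairs:
  assumes "finite V" and arrows_pairs: "arrows V (Es @ replicate m (uniform_edges V 2))"
  shows "arrows V (Es @ [uniform_edges V (m + 1)])"
  unfolding arrows_def
proof (intro allI impI)
  fix f :: "'a \<Rightarrow> nat"
  let ?l = "length Es"
  assume f: "f ` V \<subseteq> {..<length (Es @ [uniform_edges V (m + 1)])}"
  define C where "C = {v\<in>V. f v = ?l}"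
  have "finite C" using \<open>finite V\<close> by (simp add: C_def)
  show "\<exists>i<length (Es @ [uniform_edges V (m + 1)]).
          \<exists>e\<in>(Es @ [uniform_edges V (m + 1)])!i. \<forall>v\<in>e. f v = i"
  proof (cases "m < card C")
    case True
    then obtain e where "e \<subseteq> C" "card e = m + 1"
      using obtain_subset_with_card_n[of "m + 1" C] by auto
    then show ?thesis
      by (intro exI[of _ ?l]) (auto simp: C_def uniform_edges_def)
  next
    case False
    then obtain g where g: "g ` C \<subseteq> {..<m}" "inj_on g C"
      using card_le_inj[OF \<open>finite C\<close>, of "{..<m}"] by auto
    define f' where "f' v = (if f v = ?l then ?l + g v else f v)" for v
    have "f' ` V \<subseteq> {..<length (Es @ replicate m (uniform_edges V 2))}"
      using f g(1) by (fastforce simp: f'_def C_def)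
    from arrows_pairs[unfolded arrows_def, rule_format, OF this]
    obtain i e where i: "i < ?l + m"
        and e: "e \<in> (Es @ replicate m (uniform_edges V 2))!i" and mono: "\<forall>v\<in>e. f' v = i"
      by auto
    show ?thesis
    proof (cases "i < ?l")
      case True
      then have "\<forall>v\<in>e. f v = i" using mono by (auto simp: f'_def split: if_splits)
      with True e show ?thesis
        by (intro exI[of _ i]) (auto simp: nth_append)
    next
      case False
      then have "e \<subseteq> V" "card e = 2" using e i by (auto simp: nth_append uniform_edges_def)
      then obtain a b where ab: "e = {a, b}" "a \<noteq> b" by (meson card_2_iff)
      have "a \<in> C \<and> b \<in> C \<and> g a = g b"
        using mono f False \<open>e \<subseteq> V\<close> ab(1)
        by (force simp: f'_def C_def split: if_splits)
      then show ?thesis using g(2) ab(2) by (auto dest: inj_onD)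
    qed
  qed
qed

lemma arrows_pairs_if_arrows_uniform:
  assumes arrows_uniform: "arrows V (Es @ [uniform_edges V (m + 1)])"
  shows "arrows V (Es @ replicate m (uniform_edges V 2))"
  unfolding arrows_def
proof (intro allI impI)
  fix f :: "'a \<Rightarrow> nat"
  let ?l = "length Es"
  assume f: "f ` V \<subseteq> {..<length (Es @ replicate m (uniform_edges V 2))}"
  define f' where "f' v = min (f v) ?l" for v
  have "f' ` V \<subseteq> {..<length (Es @ [uniform_edges V (m + 1)])}"
    by (auto simp: f'_def)
  from arrows_uniform[unfolded arrows_def, rule_format, OF this]
  obtain i e where i: "i < ?l + 1"
      and e: "e \<in> (Es @ [uniform_edges V (m + 1)])!i" and mono: "\<forall>v\<in>e. f' v = i"
    by auto
  show "\<exists>i<length (Es @ replicate m (uniform_edges V 2)).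
          \<exists>e\<in>(Es @ replicate m (uniform_edges V 2))!i. \<forall>v\<in>e. f v = i"
  proof (cases "i < ?l")
    case True
    then have "\<forall>v\<in>e. f v = i" using mono by (auto simp: f'_def min_def split: if_splits)
    with True e show ?thesis
      by (intro exI[of _ i]) (auto simp: nth_append)
  next
    case False
    then have "i = ?l" using i by simp
    then have "e \<subseteq> V" "card e = m + 1" using e by (auto simp: uniform_edges_def)
    have "?l \<le> f v" if "v \<in> e" for v
      using mono that \<open>i = ?l\<close> by (auto simp: f'_def)
    moreover have "f v < ?l + m" if "v \<in> e" for v
      using f that \<open>e \<subseteq> V\<close> by auto
    ultimately have into: "f ` e \<subseteq> {?l..<?l + m}" by auto
    have "\<not> inj_on f e"
      using card_inj_on_le[OF _ into] \<open>card e = m + 1\<close> by auto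
    then obtain a b where ab: "a \<in> e" "b \<in> e" "a \<noteq> b" "f a = f b"
      unfolding inj_on_def by blast
    have "f a \<in> {?l..<?l + m}" using into ab(1) by auto
    then have "(Es @ replicate m (uniform_edges V 2))!f a = uniform_edges V 2"
      by (auto simp: nth_append)
    moreover have "{a, b} \<in> uniform_edges V 2"
      using ab \<open>e \<subseteq> V\<close> by (auto simp: uniform_edges_def)
    ultimately have "{a, b} \<in> (Es @ replicate m (uniform_edges V 2))!f a" by simp
    moreover have "f a < length (Es @ replicate m (uniform_edges V 2))"
      using \<open>f a \<in> {?l..<?l + m}\<close> by simp
    moreover have "\<forall>v\<in>{a, b}. f v = f a" using ab(4) by simp
    ultimately show ?thesis by blast
  qed
qed

lemma card_eq_sum_card_colour_classes:
  fixes k :: nat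
  assumes "finite V" and "f ` V \<subseteq> {..<k}"
  shows "card V = (\<Sum>i<k. card {v\<in>V. f v = i})"
proof -
  have "V = (\<Union>i<k. {v\<in>V. f v = i})" using assms(2) by auto
  also have "card \<dots> = (\<Sum>i<k. card {v\<in>V. f v = i})"
    by (rule card_UN_disjoint) (use assms(1) in auto)
  finally show ?thesis .
qed

lemma arrows_uniform_if_independent_sets_small:
  fixes s :: real
  assumes "finite V" and "s > 1" and large: "s * real m < real (card V)"
    and small: "\<And>S. \<forall>i<length Es. S i \<subseteq> V \<and> (\<forall>e\<in>Es!i. \<not> e \<subseteq> S i) \<Longrightarrow>
        \<forall>i<length Es. \<forall>j<length Es. i \<noteq> j \<longrightarrow> S i \<inter> S j = {} \<Longrightarrow>
        real (\<Sum>i<length Es. card (S i)) / real (card V) < 1 - 1 / s"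
  shows "arrows V (Es @ [uniform_edges V (m + 1)])"
  unfolding arrows_def
proof (intro allI impI)
  fix f :: "'a \<Rightarrow> nat"
  let ?l = "length Es"
  assume f: "f ` V \<subseteq> {..<length (Es @ [uniform_edges V (m + 1)])}"
  define S where "S i = {v\<in>V. f v = i}" for i
  show "\<exists>i<length (Es @ [uniform_edges V (m + 1)]).
          \<exists>e\<in>(Es @ [uniform_edges V (m + 1)])!i. \<forall>v\<in>e. f v = i"
  proof (cases "\<exists>i<?l. \<exists>e\<in>Es!i. \<forall>v\<in>e. f v = i")
    case True
    then show ?thesis by (auto simp: nth_append)
  next
    case False
    have "\<forall>i<?l. S i \<subseteq> V \<and> (\<forall>e\<in>Es!i. \<not> e \<subseteq> S i)"
      using False by (fastforce simp: S_def)
    moreover have "\<forall>i<?l. \<forall>j<?l. i \<noteq> j \<longrightarrow> S i \<inter> S j = {}"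
      by (auto simp: S_def)
    ultimately have "real (\<Sum>i<?l. card (S i)) / real (card V) < 1 - 1 / s"
      by (rule small)
    moreover have "0 < real (card V)"
      using large \<open>s > 1\<close> by (smt (verit) of_nat_0_le_iff mult_nonneg_nonneg)
    ultimately have "real (\<Sum>i<?l. card (S i)) < (1 - 1 / s) * real (card V)"
      by (metis pos_divide_less_eq)
    also have "\<dots> = real (card V) - real (card V) / s"
      by (simp add: algebra_simps)
    finally have "real (\<Sum>i<?l. card (S i)) < real (card V) - real (card V) / s" .
    moreover have "card V = (\<Sum>i<?l. card (S i)) + card (S ?l)"
      using card_eq_sum_card_colour_classes[OF \<open>finite V\<close>] f by (simp add: S_def)
    moreover have "real m < real (card V) / s"
      using large \<open>s > 1\<close> by (simp add: less_divide_eq mult.commute)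
    ultimately have "m < card (S ?l)" by linarith
    then obtain e where "e \<subseteq> S ?l" "card e = m + 1"
      using obtain_subset_with_card_n[of "m + 1" "S ?l"] by auto
    then show ?thesis
      by (intro exI[of _ ?l]) (auto simp: S_def uniform_edges_def)
  qed
qed

lemma vdW_eq_Inf_arrows:
  "vdW Hs = Inf {enat n | n. n \<ge> 1 \<and> arrows (fst ((Hs!0) n)) (map (\<lambda>H. snd (H n)) Hs)}"
proof -
  have "(\<exists>i<length Hs. \<exists>e\<in>map (\<lambda>H. snd (H n)) Hs ! i. \<forall>v\<in>e. f v = i)
      \<longleftrightarrow> (\<exists>i<length Hs. \<exists>e\<in>snd ((Hs!i) n). \<forall>v\<in>e. f v = i)" for n and f :: "'a \<Rightarrow> nat"
    by (metis nth_map)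
  then show ?thesis unfolding vdW_def arrows_def by simp
qed

lemma Inf_enat_witnessD:
  assumes "Inf {enat n | n. n \<ge> 1 \<and> P n} = enat k"
  shows "k \<ge> 1 \<and> P k"
proof -
  have "{enat n | n. n \<ge> 1 \<and> P n} \<noteq> {}"
    using assms by (metis Inf_empty top_enat_def enat.distinct(2))
  then have "Inf {enat n | n. n \<ge> 1 \<and> P n} \<in> {enat n | n. n \<ge> 1 \<and> P n}"
    by (meson ex_in_conv wellorder_InfI)
  then show ?thesis using assms by auto
qed

lemma vdW_append_Qseq:
  assumes "Gs \<noteq> []" and "\<And>n. fst ((Gs!0) n) = V n"
  shows "vdW (Gs @ map (Qseq V) ks) = Inf {enat n | n. n \<ge> 1 \<and>
      arrows (V n) (map (\<lambda>H. snd (H n)) Gs @ map (uniform_edges (V n)) ks)}"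
proof -
  have "fst (((Gs @ Hs)!0) n) = V n" for Hs n
    using assms by (simp add: nth_append)
  moreover have "map (\<lambda>H. snd (H n)) (map (Qseq V) ks) = map (uniform_edges (V n)) ks" for n
    by (induction ks) (simp_all add: Qseq_def uniform_edges_def)
  ultimately show ?thesis by (simp only: vdW_eq_Inf_arrows map_append)
qed

lemma nontrivial_monotonic_finite:
  "nontrivial_monotonic H \<Longrightarrow> 1 \<le> n \<Longrightarrow> finite (fst (H n))"
  by (simp add: nontrivial_monotonic_def hypergraph_def)

lemma nontrivial_monotonic_vertices_mono:
  assumes "nontrivial_monotonic H" and "1 \<le> a" and "a \<le> b"
  shows "fst (H a) \<subseteq> fst (H b)"
  using assms(3)
proof (induction b rule: dec_induct)
  case (step k)
  then have "1 \<le> k" using assms(2) by simp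
  then have "fst (H k) \<subseteq> fst (H (Suc k))"
    using assms(1) unfolding nontrivial_monotonic_def by blast
  with step.IH show ?case by blast
qed simp

lemma independent_sets_small_if_cr:
  assumes "cr Gs q = enat k" and "k \<le> n" and "Gs \<noteq> []"
    and vertices: "\<forall>i<length Gs. fst ((Gs!i) n) = V"
    and "\<forall>i<length Gs. S i \<subseteq> V \<and> (\<forall>e\<in>snd ((Gs!i) n). \<not> e \<subseteq> S i)"
    and "\<forall>i<length Gs. \<forall>j<length Gs. i \<noteq> j \<longrightarrow> S i \<inter> S j = {}"
  shows "real (\<Sum>i<length Gs. card (S i)) / real (card V) < q"
proof -
  have "\<forall>n'\<ge>k. \<forall>S :: nat \<Rightarrow> 'a set.
         (\<forall>i<length Gs. S i \<subseteq> fst ((Gs!i) n') \<and> independent ((Gs!i) n') (S i))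
         \<and> (\<forall>i<length Gs. \<forall>j<length Gs. i \<noteq> j \<longrightarrow> S i \<inter> S j = {})
         \<longrightarrow> real (\<Sum>i<length Gs. card (S i)) / real (card (fst ((Gs!0) n'))) < q"
    using Inf_enat_witnessD[OF assms(1)[unfolded cr_def]] by blast
  moreover have "fst ((Gs!0) n) = V" using vertices \<open>Gs \<noteq> []\<close> by simp
  ultimately show ?thesis
    using assms(2-) unfolding independent_def by (metis (no_types, lifting))
qed

lemma vdW_pairs_eq_vdW_uniform:
  assumes "Gs \<noteq> []" and "nontrivial_monotonic (Gs!0)"
  defines "V \<equiv> \<lambda>n. fst ((Gs!0) n)"
  shows "vdW (Gs @ replicate m (Qseq V 2)) = vdW (Gs @ [Qseq V (m + 1)])"
proof -
  have "arrows (V n) (Es @ replicate m (uniform_edges (V n) 2))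
      \<longleftrightarrow> arrows (V n) (Es @ [uniform_edges (V n) (m + 1)])" if "1 \<le> n" for n Es
    using arrows_uniform_if_arrows_pairs[OF nontrivial_monotonic_finite[OF assms(2) that]]
      arrows_pairs_if_arrows_uniform
    unfolding V_def by blast
  then have "{enat n | n. n \<ge> 1 \<and>
        arrows (V n) (map (\<lambda>H. snd (H n)) Gs @ replicate m (uniform_edges (V n) 2))}
      = {enat n | n. n \<ge> 1 \<and> arrows (V n) (map (\<lambda>H. snd (H n)) Gs @ [uniform_edges (V n) (m + 1)])}"
    by blast
  then show ?thesis
    using vdW_append_Qseq[OF assms(1), of V "replicate m 2"] vdW_append_Qseq[OF assms(1), of V "[m + 1]"]
    by (simp add: V_def)
qed

lemma vdW_uniform_le_max_Mfun_cr:
  fixes s :: real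
  assumes "Gs \<noteq> []" and G0: "nontrivial_monotonic (Gs!0)" and "compatible Gs" and "s > 1"
  defines "V \<equiv> \<lambda>n. fst ((Gs!0) n)"
  shows "vdW (Gs @ [Qseq V (m + 1)]) \<le> max (Mfun V (s * real m)) (cr Gs (1 - 1 / s))"
proof (cases "Mfun V (s * real m)"; cases "cr Gs (1 - 1 / s)")
  fix n1 n2 assume n1: "Mfun V (s * real m) = enat n1" and n2: "cr Gs (1 - 1 / s) = enat n2"
  define n where "n = max n1 n2"
  define Es where "Es = map (\<lambda>H. snd (H n)) Gs"
  have "1 \<le> n1" and large1: "s * real m < real (card (V n1))"
    using Inf_enat_witnessD[OF n1[unfolded Mfun_def]] by auto
  then have "1 \<le> n" by (simp add: n_def)
  then have fin: "finite (V n)"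
    unfolding V_def by (rule nontrivial_monotonic_finite[OF G0])
  have "V n1 \<subseteq> V n"
    unfolding V_def by (rule nontrivial_monotonic_vertices_mono[OF G0 \<open>1 \<le> n1\<close>]) (simp add: n_def)
  then have large: "s * real m < real (card (V n))"
    using large1 card_mono[OF fin] by (meson of_nat_le_iff order_less_le_trans)
  have vertices: "\<forall>i<length Gs. fst ((Gs!i) n) = V n"
    using assms(3) \<open>1 \<le> n\<close> \<open>Gs \<noteq> []\<close> unfolding compatible_def V_def by blast
  have small: "real (\<Sum>i<length Es. card (S i)) / real (card (V n)) < 1 - 1 / s"
    if "\<forall>i<length Es. S i \<subseteq> V n \<and> (\<forall>e\<in>Es!i. \<not> e \<subseteq> S i)"
      and "\<forall>i<length Es. \<forall>j<length Es. i \<noteq> j \<longrightarrow> S i \<inter> S j = {}" for S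
  proof -
    have len: "length Es = length Gs" and "\<forall>i<length Gs. Es!i = snd ((Gs!i) n)"
      by (simp_all add: Es_def)
    with that show ?thesis unfolding len
      by (intro independent_sets_small_if_cr[OF n2 _ \<open>Gs \<noteq> []\<close> vertices]) (auto simp: n_def)
  qed
  have "arrows (V n) (Es @ [uniform_edges (V n) (m + 1)])"
    by (rule arrows_uniform_if_independent_sets_small[OF fin \<open>s > 1\<close> large small])
  then have "vdW (Gs @ [Qseq V (m + 1)]) \<le> enat n"
    using vdW_append_Qseq[OF \<open>Gs \<noteq> []\<close>, of V "[m + 1]"] \<open>1 \<le> n\<close>
    by (simp add: V_def Es_def Inf_lower)
  then show ?thesis using n1 n2 by (simp add: n_def)
qed auto

theorem theorem1:
  fixes Gs :: "'a hseq list" and s :: real and m :: nat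
  assumes "length Gs \<ge> 1"
    and "\<forall>G\<in>set Gs. nontrivial_monotonic G"
    and "compatible Gs"
    and "s > 1"
  shows "vdW (Gs @ replicate m (Qseq (\<lambda>n. fst ((Gs!0) n)) 2))
           = vdW (Gs @ [Qseq (\<lambda>n. fst ((Gs!0) n)) (m + 1)])
       \<and> vdW (Gs @ [Qseq (\<lambda>n. fst ((Gs!0) n)) (m + 1)])
           \<le> max (Mfun (\<lambda>n. fst ((Gs!0) n)) (s * real m)) (cr Gs (1 - 1 / s))"
proof -
  have "Gs \<noteq> []" using assms(1) by auto
  then have "nontrivial_monotonic (Gs!0)" using assms(2) by simp
  with \<open>Gs \<noteq> []\<close> show ?thesis
    using vdW_pairs_eq_vdW_uniform vdW_uniform_le_max_Mfun_cr assms(3,4) by blast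
qed

end
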